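(* Let $G$ be a unicyclic graph. Then $G$ has exactly three distinct normalized Laplacian eigenvalues if and only if $G=C_4$ or $G=C_5$.
   Context: A unicyclic graph is a connected graph with $n$ vertices and $n$ edges. $C_n$ denotes the cycle on $n$ vertices. For a graph with adjacency matrix $A$ and diagonal degree matrix $D$ (no isolated vertices), the normalized Laplacian is $\mathcal{L}=I-D^{-1/2}AD^{-1/2}$, and its eigenvalues are the normalized Laplacian eigenvalues. *)

theory Defs
  imports Complex_Main
begin

definition simple_graph :: "'a set \<Rightarrow> ('a \<Rightarrow> 'a \<Rightarrow> bool) \<Rightarrow> bool" where
  "simple_graph V E \<longleftrightarrow> finite V \<and> (\<forall>u v. E u v \<longrightarrow> u \<in> V \<and> v \<in> V)
     \<and> (\<forall>u v. E u v \<longrightarrow> E v u) \<and> (\<forall>u. \<not> E u u)"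

definition graph_edges :: "('a \<Rightarrow> 'a \<Rightarrow> bool) \<Rightarrow> 'a set set" where
  "graph_edges E = {{u, v} | u v. E u v}"

definition connected_graph :: "'a set \<Rightarrow> ('a \<Rightarrow> 'a \<Rightarrow> bool) \<Rightarrow> bool" where
  "connected_graph V E \<longleftrightarrow> V \<noteq> {} \<and> (\<forall>u\<in>V. \<forall>v\<in>V. E\<^sup>*\<^sup>* u v)"

definition unicyclic :: "'a set \<Rightarrow> ('a \<Rightarrow> 'a \<Rightarrow> bool) \<Rightarrow> bool" where
  "unicyclic V E \<longleftrightarrow> simple_graph V E \<and> connected_graph V E
     \<and> card (graph_edges E) = card V"

definition degree :: "'a set \<Rightarrow> ('a \<Rightarrow> 'a \<Rightarrow> bool) \<Rightarrow> 'a \<Rightarrow> nat" where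
  "degree V E u = card {v \<in> V. E u v}"

text \<open>Entries of the normalized Laplacian I - D^(-1/2) A D^(-1/2), indexed by V x V.\<close>
definition nlap :: "'a set \<Rightarrow> ('a \<Rightarrow> 'a \<Rightarrow> bool) \<Rightarrow> 'a \<Rightarrow> 'a \<Rightarrow> real" where
  "nlap V E u v = (if u = v then 1 else 0)
     - (if E u v then 1 / sqrt (real (degree V E u) * real (degree V E v)) else 0)"

definition nlap_eigenvalue :: "'a set \<Rightarrow> ('a \<Rightarrow> 'a \<Rightarrow> bool) \<Rightarrow> real \<Rightarrow> bool" where
  "nlap_eigenvalue V E \<mu> \<longleftrightarrow> (\<exists>x :: 'a \<Rightarrow> real. (\<exists>u\<in>V. x u \<noteq> 0)
     \<and> (\<forall>u\<in>V. (\<Sum>v\<in>V. nlap V E u v * x v) = \<mu> * x u))"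

definition is_cycle_graph :: "'a set \<Rightarrow> ('a \<Rightarrow> 'a \<Rightarrow> bool) \<Rightarrow> nat \<Rightarrow> bool" where
  "is_cycle_graph V E n \<longleftrightarrow> (\<exists>f. bij_betw f V {..<n} \<and>
     (\<forall>u\<in>V. \<forall>v\<in>V. E u v \<longleftrightarrow> ((f u + 1) mod n = f v \<or> (f v + 1) mod n = f u)))"

end

theory Submission
  imports Defs "HOL-Computational_Algebra.Fundamental_Theorem_Algebra"
begin

(* If a connected graph has only three distinct normalized Laplacian eigenvalues r1, r2, r3,
   then, L being symmetric, (L - r1)(L - r2)(L - r3) = 0.  Reading off the entry at two
   vertices at distance three, which equals the entry of L^3 and is a nonzero sum of terms of
   one sign, shows that the diameter is at most two.  A unicyclic graph of diameter at most two
   is, viewed from a vertex of maximum degree, a triangle (possibly with pendant vertices at one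
   of its vertices), C4 or C5.  The triangle has two eigenvalues, the triangle with pendants at
   least four (again by evaluating the cubic annihilator), while C4 and C5 have exactly three. *)

section \<open>Polynomials in a real symmetric matrix\<close>

lemma card_less_imp_linear_relation:
  fixes f :: "'i \<Rightarrow> 'a \<Rightarrow> 'b::field"
  assumes "finite V" "finite I" "card V < card I"
  shows "\<exists>c. (\<exists>i\<in>I. c i \<noteq> 0) \<and> (\<forall>u\<in>V. (\<Sum>i\<in>I. c i * f i u) = 0)"
  using assms
proof (induction V arbitrary: I f rule: finite_induct)
  case empty
  then have "I \<noteq> {}" by auto
  then show ?case by (auto intro!: exI[of _ "\<lambda>_. 1"])
next
  case (insert a V)
  show ?case
  proof (cases "\<forall>i\<in>I. f i a = 0")
    case True
    have "card V < card I" using insert by simp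
    from insert.IH[OF insert.prems(1) this]
    obtain c where "\<exists>i\<in>I. c i \<noteq> 0" "\<forall>u\<in>V. (\<Sum>i\<in>I. c i * f i u) = 0" by blast
    then show ?thesis using True by (intro exI[of _ c]) auto
  next
    case False
    then obtain j where j: "j \<in> I" "f j a \<noteq> 0" by auto
    \<comment> \<open>Gaussian elimination of the coordinate a with the pivot f j.\<close>
    define I' where "I' = I - {j}"
    define g where "g i u = f i u - (f i a / f j a) * f j u" for i u
    have "finite I'" using insert.prems by (simp add: I'_def)
    moreover have "card V < card I'" using insert.prems insert.hyps j by (simp add: I'_def)
    ultimately obtain c' where c': "\<exists>i\<in>I'. c' i \<noteq> 0" "\<forall>u\<in>V. (\<Sum>i\<in>I'. c' i * g i u) = 0"
      using insert.IH by blast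
    define c where "c i = (if i = j then - (\<Sum>i\<in>I'. c' i * f i a) / f j a else c' i)" for i
    have cj: "c j = - (\<Sum>i\<in>I'. c' i * f i a) / f j a" by (simp add: c_def)
    have key: "(\<Sum>i\<in>I. c i * f i u) = (\<Sum>i\<in>I'. c' i * g i u)" for u
    proof -
      have "(\<Sum>i\<in>I. c i * f i u) = c j * f j u + (\<Sum>i\<in>I'. c i * f i u)"
        using j insert.prems(1) unfolding I'_def by (simp add: sum.remove)
      also have "(\<Sum>i\<in>I'. c i * f i u) = (\<Sum>i\<in>I'. c' i * f i u)"
        by (rule sum.cong) (auto simp: c_def I'_def)
      finally have A: "(\<Sum>i\<in>I. c i * f i u) = c j * f j u + (\<Sum>i\<in>I'. c' i * f i u)" .
      have B: "(\<Sum>i\<in>I'. c' i * g i u) = (\<Sum>i\<in>I'. c' i * f i u) - (\<Sum>i\<in>I'. c' i * f i a) / f j a * f j u"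
        by (simp add: g_def right_diff_distrib sum_subtractf sum_distrib_right sum_divide_distrib mult.assoc)
      show ?thesis unfolding A B cj by (simp add: algebra_simps)
    qed
    show ?thesis
    proof (intro exI[of _ c] conjI)
      show "\<exists>i\<in>I. c i \<noteq> 0" using c'(1) by (auto simp: c_def I'_def)
      show "\<forall>u\<in>insert a V. (\<Sum>i\<in>I. c i * f i u) = 0"
        using c'(2) by (auto simp: key g_def j)
    qed
  qed
qed

locale real_symmetric_matrix =
  fixes V :: "'a set" and M :: "'a \<Rightarrow> 'a \<Rightarrow> real"
  assumes finite_V: "finite V" and symmetric: "M u v = M v u"
begin

definition eigenvalue :: "real \<Rightarrow> bool" where
  "eigenvalue \<mu> \<longleftrightarrow> (\<exists>x. (\<exists>u\<in>V. x u \<noteq> 0) \<and> (\<forall>u\<in>V. (\<Sum>v\<in>V. M u v * x v) = \<mu> * x u))"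

definition mat_vec :: "('a \<Rightarrow> 'b::real_field) \<Rightarrow> 'a \<Rightarrow> 'b" where
  "mat_vec x u = (\<Sum>v\<in>V. of_real (M u v) * x v)"

definition shift :: "'b \<Rightarrow> ('a \<Rightarrow> 'b) \<Rightarrow> 'a \<Rightarrow> 'b::real_field" where
  "shift z x u = mat_vec x u - z * x u"

definition shift_prod :: "real list \<Rightarrow> ('a \<Rightarrow> 'b) \<Rightarrow> 'a \<Rightarrow> 'b::real_field" where
  "shift_prod rs x = foldr (\<lambda>r. shift (of_real r)) rs x"

definition vanishes :: "('a \<Rightarrow> 'b::zero) \<Rightarrow> bool" where
  "vanishes x \<longleftrightarrow> (\<forall>u\<in>V. x u = 0)"

lemma shift_prod_Nil [simp]: "shift_prod [] x = x"
  and shift_prod_Cons [simp]: "shift_prod (r # rs) x = shift (of_real r) (shift_prod rs x)"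
  by (simp_all add: shift_prod_def)

lemma mat_vec_diff: "mat_vec (\<lambda>u. x u - c * y u) = (\<lambda>u. mat_vec x u - c * mat_vec y u)"
  by (rule ext) (simp add: mat_vec_def sum_subtractf sum_distrib_left algebra_simps)

lemma mat_vec_cong: "(\<And>u. u \<in> V \<Longrightarrow> x u = y u) \<Longrightarrow> mat_vec x = mat_vec y"
  by (rule ext) (simp add: mat_vec_def)

lemma shift_commute: "shift a (shift b x) = shift b (shift a x)"
  unfolding shift_def[abs_def] by (rule ext) (simp add: mat_vec_diff algebra_simps)

lemma shift_prod_shift: "shift_prod rs (shift z x) = shift z (shift_prod rs x)"
  by (induction rs) (auto simp: shift_commute)

lemma shift_prod_remove1:
  "r \<in> set rs \<Longrightarrow> shift_prod rs x = shift (of_real r) (shift_prod (remove1 r rs) x)"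
  by (induction rs) (auto simp: shift_commute)

lemma vanishes_shift_prod: "vanishes x \<Longrightarrow> vanishes (shift_prod rs x)"
proof (induction rs)
  case (Cons r rs)
  then have "mat_vec (shift_prod rs x) = mat_vec (\<lambda>_. 0)"
    by (intro mat_vec_cong) (simp add: vanishes_def)
  with Cons show ?case by (simp add: vanishes_def shift_def mat_vec_def)
qed simp

lemma shift_prod_of_real:
  "shift_prod rs (\<lambda>u. of_real (x u)) = (\<lambda>u. of_real (shift_prod rs x u) :: 'b::real_field)"
  by (induction rs) (auto simp: shift_def mat_vec_def fun_eq_iff)

definition cinner :: "('a \<Rightarrow> complex) \<Rightarrow> ('a \<Rightarrow> complex) \<Rightarrow> complex" where
  "cinner x y = (\<Sum>u\<in>V. cnj (x u) * y u)"

lemma cinner_mat_vec: "cinner x (mat_vec y) = cinner (mat_vec x) y"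
proof -
  have "cinner x (mat_vec y) = (\<Sum>u\<in>V. \<Sum>v\<in>V. cnj (x u) * of_real (M u v) * y v)"
    by (simp add: cinner_def mat_vec_def sum_distrib_left mult.assoc)
  also have "\<dots> = (\<Sum>v\<in>V. \<Sum>u\<in>V. cnj (x u) * of_real (M u v) * y v)"
    by (rule sum.swap)
  also have "\<dots> = cinner (mat_vec x) y"
    by (simp add: cinner_def mat_vec_def sum_distrib_left sum_distrib_right symmetric algebra_simps)
  finally show ?thesis .
qed

lemma cinner_shift:
  fixes x y :: "'a \<Rightarrow> complex"
  shows "cinner x (shift (of_real r) y) = cinner (shift (of_real r) x) y"
  using cinner_mat_vec[of x y]
  by (simp add: cinner_def shift_def ring_distribs sum_subtractf sum_distrib_left algebra_simps)

lemma vanishes_if_cinner_self: "cinner x x = 0 \<Longrightarrow> vanishes x"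
proof -
  assume "cinner x x = 0"
  moreover have "cnj (x u) * x u = of_real ((norm (x u))\<^sup>2)" for u
    by (metis complex_norm_square mult.commute)
  then have "cinner x x = of_real (\<Sum>u\<in>V. (norm (x u))\<^sup>2)"
    by (simp only: cinner_def of_real_sum)
  ultimately have "(\<Sum>u\<in>V. (norm (x u))\<^sup>2) = 0" by (metis of_real_eq_0_iff)
  then show ?thesis using finite_V by (simp add: sum_nonneg_eq_0_iff vanishes_def)
qed

lemma cinner_vanishes: "vanishes y \<Longrightarrow> cinner x y = 0"
  by (simp add: vanishes_def cinner_def)

lemma vanishes_shift_square:
  fixes y :: "'a \<Rightarrow> complex"
  assumes "vanishes (shift (of_real r) (shift (of_real r) y))"
  shows "vanishes (shift (of_real r) y)"
proof -
  have "cinner (shift (of_real r) y) (shift (of_real r) y) = 0"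
    using assms by (simp add: cinner_shift[symmetric] cinner_vanishes)
  then show ?thesis by (rule vanishes_if_cinner_self)
qed

lemma eigenvalue_if_vanishes_shift:
  fixes x :: "'a \<Rightarrow> complex"
  assumes "vanishes (shift z x)" and "\<not> vanishes x"
  shows "Im z = 0 \<and> eigenvalue (Re z)"
proof -
  have Mx: "mat_vec x u = z * x u" if "u \<in> V" for u
    using assms(1) that by (simp add: vanishes_def shift_def)
  have "z * cinner x x = cinner x (mat_vec x)"
    using Mx by (simp add: cinner_def sum_distrib_left algebra_simps)
  also have "\<dots> = cinner (mat_vec x) x" by (rule cinner_mat_vec)
  also have "\<dots> = cnj z * cinner x x"
    using Mx by (simp add: cinner_def sum_distrib_left algebra_simps)
  finally have "z = cnj z" using assms(2) vanishes_if_cinner_self by auto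
  then have Im_z: "Im z = 0" by (simp add: complex_eq_iff)
  have Re_eq: "(\<Sum>v\<in>V. M u v * Re (x v)) = Re z * Re (x u)"
    and Im_eq: "(\<Sum>v\<in>V. M u v * Im (x v)) = Re z * Im (x u)" if "u \<in> V" for u
    using arg_cong[OF Mx[OF that], of Re] arg_cong[OF Mx[OF that], of Im] Im_z
    by (simp_all add: mat_vec_def Re_sum Im_sum)
  obtain u where u: "u \<in> V" "x u \<noteq> 0" using assms(2) by (auto simp: vanishes_def)
  then have "Re (x u) \<noteq> 0 \<or> Im (x u) \<noteq> 0" by (simp add: complex_eq_iff)
  then have "eigenvalue (Re z)"
  proof
    assume "Re (x u) \<noteq> 0"
    then show ?thesis
      unfolding eigenvalue_def using u Re_eq by (intro exI[of _ "\<lambda>v. Re (x v)"]) auto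
  next
    assume "Im (x u) \<noteq> 0"
    then show ?thesis
      unfolding eigenvalue_def using u Im_eq by (intro exI[of _ "\<lambda>v. Im (x v)"]) auto
  qed
  with Im_z show ?thesis by simp
qed

definition poly_mat_vec :: "complex poly \<Rightarrow> ('a \<Rightarrow> complex) \<Rightarrow> 'a \<Rightarrow> complex" where
  "poly_mat_vec p x u = (\<Sum>k\<le>degree p. coeff p k * (mat_vec ^^ k) x u)"

lemma poly_mat_vec_degree_le:
  "degree p \<le> n \<Longrightarrow> poly_mat_vec p x u = (\<Sum>k\<le>n. coeff p k * (mat_vec ^^ k) x u)"
  unfolding poly_mat_vec_def by (rule sum.mono_neutral_left) (auto simp: coeff_eq_0)

lemma mat_vec_pow_diff:
  "(mat_vec ^^ k) (\<lambda>u. x u - c * y u) = (\<lambda>u. (mat_vec ^^ k) x u - c * (mat_vec ^^ k) y u)"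
  by (induction k) (simp_all add: mat_vec_diff)

lemma poly_mat_vec_linear_factor: "poly_mat_vec ([:-z, 1:] * q) x = poly_mat_vec q (shift z x)"
proof
  fix u
  define n where "n = degree q"
  have "degree ([:-z, 1:] * q) \<le> Suc n"
    using degree_mult_le[of "[:-z, 1:]" q] by (simp add: n_def)
  then have "poly_mat_vec ([:-z, 1:] * q) x u
      = (\<Sum>k\<le>Suc n. coeff (pCons 0 q) k * (mat_vec ^^ k) x u)
        - z * (\<Sum>k\<le>Suc n. coeff q k * (mat_vec ^^ k) x u)"
    by (simp add: poly_mat_vec_degree_le algebra_simps sum.distrib sum_distrib_left sum_subtractf)
  also have "(\<Sum>k\<le>Suc n. coeff q k * (mat_vec ^^ k) x u) = (\<Sum>k\<le>n. coeff q k * (mat_vec ^^ k) x u)"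
    by (simp add: n_def coeff_eq_0)
  also have "(\<Sum>k\<le>Suc n. coeff (pCons 0 q) k * (mat_vec ^^ k) x u)
      = (\<Sum>k\<le>n. coeff q k * (mat_vec ^^ Suc k) x u)"
    by (subst sum.atMost_Suc_shift) simp
  also have "(\<Sum>k\<le>n. coeff q k * (mat_vec ^^ Suc k) x u) - z * (\<Sum>k\<le>n. coeff q k * (mat_vec ^^ k) x u)
      = (\<Sum>k\<le>n. coeff q k * ((mat_vec ^^ Suc k) x u - z * (mat_vec ^^ k) x u))"
    by (simp add: algebra_simps sum_subtractf sum_distrib_left)
  also have "\<dots> = (\<Sum>k\<le>n. coeff q k * (mat_vec ^^ k) (shift z x) u)"
    by (simp add: shift_def[abs_def] mat_vec_pow_diff funpow_swap1)
  also have "\<dots> = poly_mat_vec q (shift z x) u" by (simp add: poly_mat_vec_def n_def)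
  finally show "poly_mat_vec ([:-z, 1:] * q) x u = poly_mat_vec q (shift z x) u" .
qed

lemma exists_annihilating_poly: "\<exists>p. p \<noteq> 0 \<and> vanishes (poly_mat_vec p x)"
proof -
  define n where "n = card V"
  have "card V < card {..n}" by (simp add: n_def)
  from card_less_imp_linear_relation[OF finite_V _ this, of "\<lambda>k u. (mat_vec ^^ k) x u"]
  obtain c where c: "\<exists>i\<in>{..n}. c i \<noteq> 0" "\<forall>u\<in>V. (\<Sum>i\<le>n. c i * (mat_vec ^^ i) x u) = 0"
    by auto
  define p where "p = (\<Sum>k\<le>n. monom (c k) k)"
  have coeff_p: "coeff p k = (if k \<le> n then c k else 0)" for k
    by (simp add: p_def coeff_sum coeff_monom)
  have "degree p \<le> n" by (rule degree_le) (simp add: coeff_p)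
  then have "vanishes (poly_mat_vec p x)"
    using c(2) by (simp add: vanishes_def poly_mat_vec_degree_le coeff_p)
  moreover have "p \<noteq> 0" using c(1) coeff_p by (metis coeff_0 atMost_iff)
  ultimately show ?thesis by blast
qed

(* Every root of an annihilating polynomial either is an eigenvalue or can be divided out;
   repeated eigenvalues cost nothing by vanishes_shift_square. *)
lemma vanishes_shift_prod_if_annihilated:
  assumes eigs: "\<And>\<mu>. eigenvalue \<mu> \<Longrightarrow> \<mu> \<in> set rs"
  shows "p \<noteq> 0 \<Longrightarrow> vanishes (poly_mat_vec p x) \<Longrightarrow> vanishes (shift_prod rs x)"
proof (induction "degree p" arbitrary: p x rule: less_induct)
  case less
  show ?case
  proof (cases "degree p = 0")
    case True
    then have "poly_mat_vec p x u = coeff p 0 * x u" for u by (simp add: poly_mat_vec_def)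
    moreover have "coeff p 0 \<noteq> 0" using True less.prems(1) by (metis leading_coeff_0_iff)
    ultimately have "vanishes x" using less.prems(2) by (simp add: vanishes_def)
    then show ?thesis by (rule vanishes_shift_prod)
  next
    case False
    then have "\<not> constant (poly p)" by (simp add: constant_degree)
    then obtain z where "poly p z = 0" using fundamental_theorem_of_algebra by blast
    then have "[:-z, 1:] dvd p" by (simp add: dvd_iff_poly_eq_0)
    then obtain q where pq: "p = [:-z, 1:] * q" by (elim dvdE)
    with less.prems(1) have q: "q \<noteq> 0" by auto
    then have "degree q < degree p" by (simp add: pq degree_mult_eq del: mult_pCons_left)
    moreover have "vanishes (poly_mat_vec q (shift z x))"
      using less.prems(2) by (simp only: pq poly_mat_vec_linear_factor)
    ultimately have "vanishes (shift_prod rs (shift z x))" using less.hyps q by blast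
    then have zx: "vanishes (shift z (shift_prod rs x))" by (simp only: shift_prod_shift)
    show ?thesis
    proof (rule ccontr)
      assume "\<not> vanishes (shift_prod rs x)"
      from eigenvalue_if_vanishes_shift[OF zx this] eigs
      have z: "z = of_real (Re z)" and "Re z \<in> set rs" by (auto simp: complex_eq_iff)
      then have "shift_prod rs x = shift z (shift_prod (remove1 (Re z) rs) x)"
        by (metis shift_prod_remove1)
      with zx z vanishes_shift_square have "vanishes (shift_prod rs x)" by metis
      with \<open>\<not> vanishes (shift_prod rs x)\<close> show False ..
    qed
  qed
qed

theorem shift_prod_eq_0:
  fixes x :: "'a \<Rightarrow> real"
  assumes "\<And>\<mu>. eigenvalue \<mu> \<Longrightarrow> \<mu> \<in> set rs" and "u \<in> V"
  shows "shift_prod rs x u = 0"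
proof -
  have "vanishes (shift_prod rs (\<lambda>u. complex_of_real (x u)))"
    using exists_annihilating_poly vanishes_shift_prod_if_annihilated[OF assms(1)] by blast
  with assms(2) show ?thesis by (simp add: shift_prod_of_real vanishes_def)
qed

end

section \<open>The normalized Laplacian of a finite simple graph\<close>

definition neighbours :: "'a set \<Rightarrow> ('a \<Rightarrow> 'a \<Rightarrow> bool) \<Rightarrow> 'a \<Rightarrow> 'a set" where
  "neighbours V E u = {v \<in> V. E u v}"

locale finite_simple_graph =
  fixes V :: "'a set" and E :: "'a \<Rightarrow> 'a \<Rightarrow> bool"
  assumes simple: "simple_graph V E"
begin

lemma adj_in_V: "E u v \<Longrightarrow> u \<in> V \<and> v \<in> V"
  and adj_sym: "E u v \<Longrightarrow> E v u"
  and adj_irrefl: "\<not> E u u"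
  using simple by (simp_all add: simple_graph_def)

lemma adj_neq: "E u v \<Longrightarrow> u \<noteq> v"
  using adj_irrefl by blast

lemma nlap_sym: "nlap V E u v = nlap V E v u"
  unfolding nlap_def using adj_sym by (auto simp: mult.commute)

sublocale real_symmetric_matrix V "nlap V E"
  using simple by unfold_locales (auto simp: simple_graph_def nlap_sym)

lemma eigenvalue_iff_nlap_eigenvalue: "eigenvalue \<mu> \<longleftrightarrow> nlap_eigenvalue V E \<mu>"
  by (simp add: eigenvalue_def nlap_eigenvalue_def)

lemma nlap_eigenvalue_iff_mat_vec:
  "nlap_eigenvalue V E \<mu> \<longleftrightarrow> (\<exists>x. (\<exists>u\<in>V. x u \<noteq> 0) \<and> (\<forall>u\<in>V. mat_vec x u = \<mu> * x u))"
  by (simp add: nlap_eigenvalue_def mat_vec_def)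

lemma finite_neighbours: "finite (neighbours V E u)"
  using finite_V by (simp add: neighbours_def)

lemma degree_eq_card_neighbours: "Defs.degree V E u = card (neighbours V E u)"
  by (simp add: Defs.degree_def neighbours_def)

lemma degree_pos: "E u v \<Longrightarrow> 0 < Defs.degree V E u"
  using adj_in_V finite_neighbours by (auto simp: degree_eq_card_neighbours card_gt_0_iff neighbours_def)

lemma nlap_same [simp]: "nlap V E u u = 1"
  by (simp add: nlap_def adj_irrefl)

lemma nlap_nonadjacent: "u \<noteq> v \<Longrightarrow> \<not> E u v \<Longrightarrow> nlap V E u v = 0"
  by (simp add: nlap_def)

lemma nlap_adjacent:
  "E u v \<Longrightarrow> nlap V E u v = - 1 / sqrt (card (neighbours V E u) * card (neighbours V E v))"
  using adj_neq by (simp add: nlap_def degree_eq_card_neighbours)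

lemma nlap_adjacent_neg: "E u v \<Longrightarrow> nlap V E u v < 0"
  using degree_pos[of u v] degree_pos[of v u] adj_sym
  by (simp add: nlap_def adj_neq degree_eq_card_neighbours)

lemma mat_vec_neighbours:
  fixes x :: "'a \<Rightarrow> real"
  assumes "u \<in> V"
  shows "mat_vec x u = x u + (\<Sum>v\<in>neighbours V E u. nlap V E u v * x v)"
proof -
  have "mat_vec x u = x u + (\<Sum>v\<in>V - {u}. nlap V E u v * x v)"
    using assms finite_V by (simp add: mat_vec_def sum.remove)
  also have "(\<Sum>v\<in>V - {u}. nlap V E u v * x v) = (\<Sum>v\<in>neighbours V E u. nlap V E u v * x v)"
    using finite_V adj_irrefl
    by (intro sum.mono_neutral_right) (auto simp: neighbours_def intro: nlap_nonadjacent)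
  finally show ?thesis .
qed

lemma mat_vec_indicator: "y \<in> V \<Longrightarrow> mat_vec (\<lambda>z. if z = y then 1 else 0) u = nlap V E u y"
  using finite_V by (simp add: mat_vec_def if_distrib cong: if_cong)

(* The vector D^(1/2) 1 lies in the kernel of L. *)
lemma nlap_eigenvalue_0:
  assumes "E a b"
  shows "nlap_eigenvalue V E 0"
proof -
  define x where "x v = sqrt (card (neighbours V E v))" for v
  have "mat_vec x u = 0" if u: "u \<in> V" for u
  proof (cases "neighbours V E u = {}")
    case False
    then have pos: "0 < card (neighbours V E u)" using finite_neighbours by (simp add: card_gt_0_iff)
    have "nlap V E u v * x v = - 1 / x u" if "v \<in> neighbours V E u" for v
      using that degree_pos[of v u] adj_sym
      by (simp add: neighbours_def nlap_adjacent x_def real_sqrt_mult degree_eq_card_neighbours)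
    then have "(\<Sum>v\<in>neighbours V E u. nlap V E u v * x v) = - card (neighbours V E u) / x u"
      by simp
    also have "\<dots> = - x u" by (simp add: x_def real_div_sqrt)
    finally show ?thesis by (simp add: mat_vec_neighbours[OF u])
  qed (simp add: mat_vec_neighbours[OF u] x_def)
  moreover have "a \<in> V" "x a \<noteq> 0"
    using assms adj_in_V degree_pos[OF assms] by (auto simp: x_def degree_eq_card_neighbours)
  ultimately show ?thesis unfolding nlap_eigenvalue_iff_mat_vec by auto
qed

lemma mat_vec_at_zero:
  fixes x :: "'a \<Rightarrow> real"
  assumes "u \<in> V" "x u = 0"
  shows "mat_vec x u = (\<Sum>v\<in>neighbours V E u. nlap V E u v * x v)"
  using mat_vec_neighbours[OF assms(1)] assms(2) by simp

lemma mat_vec_at_zero_eq_0: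
  fixes x :: "'a \<Rightarrow> real"
  assumes "u \<in> V" "x u = 0" "\<And>v. E u v \<Longrightarrow> x v = 0"
  shows "mat_vec x u = 0"
  using assms by (simp add: mat_vec_at_zero[where x = x] neighbours_def)

lemma mat_vec_at_zero_nonneg:
  fixes x :: "'a \<Rightarrow> real"
  assumes "u \<in> V" "x u = 0" "\<And>v. E u v \<Longrightarrow> x v \<le> 0"
  shows "0 \<le> mat_vec x u"
proof -
  have "0 \<le> nlap V E u v * x v" if "E u v" for v
    using nlap_adjacent_neg[OF that] assms(3)[OF that] by (simp add: mult_nonpos_nonpos)
  then show ?thesis
    unfolding mat_vec_at_zero[where x = x, OF assms(1,2)]
    by (intro sum_nonneg) (simp add: neighbours_def)
qed

lemma mat_vec_at_zero_pos:
  fixes x :: "'a \<Rightarrow> real"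
  assumes "u \<in> V" "x u = 0" "\<And>v. E u v \<Longrightarrow> x v \<le> 0" and "E u w" "x w < 0"
  shows "0 < mat_vec x u"
  unfolding mat_vec_at_zero[where x = x, OF assms(1,2)]
proof (rule sum_pos2[OF finite_neighbours])
  show "w \<in> neighbours V E u" using assms(4) adj_in_V by (simp add: neighbours_def)
  show "0 < nlap V E u w * x w" using nlap_adjacent_neg[OF assms(4)] assms(5) by (rule mult_neg_neg)
next
  fix v assume "v \<in> neighbours V E u"
  then show "0 \<le> nlap V E u v * x v"
    using nlap_adjacent_neg[of u v] assms(3)[of v] by (simp add: neighbours_def mult_nonpos_nonpos)
qed

lemma mat_vec_at_zero_neg:
  fixes x :: "'a \<Rightarrow> real"
  assumes "u \<in> V" "x u = 0" "\<And>v. E u v \<Longrightarrow> 0 \<le> x v" and "E u w" "0 < x w"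
  shows "mat_vec x u < 0"
proof -
  have "0 < mat_vec (\<lambda>v. - x v) u"
    by (rule mat_vec_at_zero_pos[OF assms(1) _ _ assms(4)]) (use assms in auto)
  then show ?thesis by (simp add: mat_vec_def sum_negf)
qed

subsection \<open>Three eigenvalues force diameter two\<close>

definition dist_le_2 :: "'a \<Rightarrow> 'a \<Rightarrow> bool" where
  "dist_le_2 u w \<longleftrightarrow> u = w \<or> E u w \<or> (\<exists>v. E u v \<and> E v w)"

(* At distance three the (u, y) entry of (L - r1)(L - r2)(L - r3) is the (u, y) entry of L^3,
   a sum over the paths u a b y whose terms all have the same sign. *)
lemma shift_prod_indicator_neg:
  assumes "u \<in> V" "E u a" "E a b" "E b y" "\<not> dist_le_2 u y"
  shows "shift_prod [r1, r2, r3] (\<lambda>z. if z = y then 1 else 0 :: real) u < 0"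
proof -
  have V: "a \<in> V" "b \<in> V" "y \<in> V" using assms adj_in_V by blast+
  define f1 where "f1 = shift r3 (\<lambda>z. if z = y then 1 else (0::real))"
  define f2 where "f2 = shift r2 f1"
  have f1: "f1 z = nlap V E z y - r3 * (if z = y then 1 else 0)" for z
    by (simp add: f1_def shift_def mat_vec_indicator[OF V(3)])
  have f1_zero: "f1 z = 0" if "z \<noteq> y" "\<not> E z y" for z
    using that by (simp add: f1 nlap_nonadjacent)
  have f1_nonpos: "f1 z \<le> 0" if "z \<noteq> y" for z
    using that nlap_adjacent_neg[of z y] by (cases "E z y") (auto simp: f1 nlap_nonadjacent)
  have f1_neg: "f1 z < 0" if "E z y" for z
    using that by (simp add: f1 adj_neq nlap_adjacent_neg)
  have f2_at: "f2 z = mat_vec f1 z" if "z \<noteq> y" "\<not> E z y" for z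
    using that by (simp add: f2_def shift_def f1_zero)
  have far: "v \<noteq> y" "\<not> E v y" if "v = u \<or> E u v" for v
    using assms(5) that unfolding dist_le_2_def by blast+
  have u_far: "u \<noteq> y" "\<not> E u y" and a_far: "a \<noteq> y" "\<not> E a y"
    using far assms(2) by blast+
  have f2_nonneg: "0 \<le> f2 v" if "v \<in> V" "v \<noteq> y" "\<not> E v y" for v
    unfolding f2_at[OF that(2,3)]
    by (rule mat_vec_at_zero_nonneg[where x = f1, OF that(1) f1_zero[OF that(2,3)]])
      (metis that(3) f1_nonpos)
  have f2_a: "0 < f2 a"
    unfolding f2_at[OF a_far]
    by (rule mat_vec_at_zero_pos[where x = f1, OF V(1) f1_zero[OF a_far] _ assms(3) f1_neg[OF assms(4)]])
      (metis a_far(2) f1_nonpos)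
  have f2_u: "f2 u = 0"
    unfolding f2_at[OF u_far]
    by (rule mat_vec_at_zero_eq_0[where x = f1, OF assms(1) f1_zero[OF u_far]]) (metis far f1_zero)
  have "shift_prod [r1, r2, r3] (\<lambda>z. if z = y then 1 else 0) = shift r1 f2"
    by (simp add: f1_def f2_def)
  then have "shift_prod [r1, r2, r3] (\<lambda>z. if z = y then 1 else 0) u = mat_vec f2 u"
    by (simp add: shift_def f2_u)
  also have "\<dots> < 0"
    by (rule mat_vec_at_zero_neg[where x = f2, OF assms(1) f2_u _ assms(2) f2_a])
      (metis adj_in_V far f2_nonneg)
  finally show ?thesis .
qed

lemma far_vertex_if_not_dist_le_2:
  assumes "E\<^sup>*\<^sup>* u w" "\<not> dist_le_2 u w"
  shows "\<exists>a b y. E u a \<and> E a b \<and> E b y \<and> \<not> dist_le_2 u y"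
  using assms
proof (induction rule: rtranclp_induct)
  case (step w w')
  show ?case
  proof (cases "dist_le_2 u w")
    case True
    then consider "u = w" | "E u w" | v where "E u v" "E v w" unfolding dist_le_2_def by blast
    then show ?thesis
    proof cases
      case 1 with step show ?thesis by (simp add: dist_le_2_def)
    next
      case 2 with step show ?thesis by (auto simp: dist_le_2_def)
    next
      case 3 with step show ?thesis by blast
    qed
  next
    case False
    with step.IH show ?thesis .
  qed
qed (simp add: dist_le_2_def)

theorem dist_le_2_if_three_eigenvalues:
  assumes "connected_graph V E"
    and "\<And>\<mu>. nlap_eigenvalue V E \<mu> \<Longrightarrow> \<mu> \<in> {r1, r2, r3}"
    and "u \<in> V" "w \<in> V"
  shows "dist_le_2 u w"
proof (rule ccontr)
  assume "\<not> dist_le_2 u w"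
  moreover have "E\<^sup>*\<^sup>* u w" using assms(1,3,4) by (simp add: connected_graph_def)
  ultimately obtain a b y where path: "E u a" "E a b" "E b y" "\<not> dist_le_2 u y"
    using far_vertex_if_not_dist_le_2 by blast
  have "shift_prod [r1, r2, r3] (\<lambda>z. if z = y then 1 else 0 :: real) u = 0"
    using assms(2,3) by (intro shift_prod_eq_0) (auto simp: eigenvalue_iff_nlap_eigenvalue)
  with shift_prod_indicator_neg[OF assms(3) path, of r1 r2 r3] show False by simp
qed

end

context finite_simple_graph
begin

lemma finite_graph_edges: "finite (graph_edges E)"
proof (rule finite_subset)
  show "graph_edges E \<subseteq> Pow V" using adj_in_V by (auto simp: graph_edges_def)
qed (simp add: finite_V)

lemma is_cycle_graph_3:
  assumes V: "V = {a0, a1, a2}" and d: "distinct [a0, a1, a2]"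
    and e: "E a0 a1" "E a1 a2" "E a2 a0"
  shows "is_cycle_graph V E 3"
proof -
  define f where "f v = (if v = a0 then 0 else if v = a1 then 1 else (2::nat))" for v
  have "bij_betw f V {..<3}"
  proof (rule bij_betw_imageI)
    show "inj_on f V" using d unfolding V f_def by (auto simp: inj_on_def)
    show "f ` V = {..<3}" using d unfolding V f_def by (auto simp: lessThan_nat_numeral)
  qed
  moreover have "\<forall>u\<in>V. \<forall>v\<in>V. E u v \<longleftrightarrow> ((f u + 1) mod 3 = f v \<or> (f v + 1) mod 3 = f u)"
    using d e adj_sym adj_irrefl unfolding V f_def by auto
  ultimately show ?thesis unfolding is_cycle_graph_def by blast
qed

lemma is_cycle_graph_4:
  assumes V: "V = {a0, a1, a2, a3}" and d: "distinct [a0, a1, a2, a3]"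
    and e: "E a0 a1" "E a1 a2" "E a2 a3" "E a3 a0" and ne: "\<not> E a0 a2" "\<not> E a1 a3"
  shows "is_cycle_graph V E 4"
proof -
  define f where "f v = (if v = a0 then 0 else if v = a1 then 1 else if v = a2 then 2 else (3::nat))" for v
  have "bij_betw f V {..<4}"
  proof (rule bij_betw_imageI)
    show "inj_on f V" using d unfolding V f_def by (auto simp: inj_on_def)
    show "f ` V = {..<4}" using d unfolding V f_def by (auto simp: lessThan_nat_numeral)
  qed
  moreover have "\<forall>u\<in>V. \<forall>v\<in>V. E u v \<longleftrightarrow> ((f u + 1) mod 4 = f v \<or> (f v + 1) mod 4 = f u)"
    using d e ne adj_sym adj_irrefl unfolding V f_def by auto
  ultimately show ?thesis unfolding is_cycle_graph_def by blast
qed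

lemma is_cycle_graph_5:
  assumes V: "V = {a0, a1, a2, a3, a4}" and d: "distinct [a0, a1, a2, a3, a4]"
    and e: "E a0 a1" "E a1 a2" "E a2 a3" "E a3 a4" "E a4 a0"
    and ne: "\<not> E a0 a2" "\<not> E a0 a3" "\<not> E a1 a3" "\<not> E a1 a4" "\<not> E a2 a4"
  shows "is_cycle_graph V E 5"
proof -
  define f where "f v = (if v = a0 then 0 else if v = a1 then 1 else if v = a2 then 2
    else if v = a3 then 3 else (4::nat))" for v
  have "bij_betw f V {..<5}"
  proof (rule bij_betw_imageI)
    show "inj_on f V" using d unfolding V f_def by (auto simp: inj_on_def)
    show "f ` V = {..<5}" using d unfolding V f_def by (auto simp: lessThan_nat_numeral)
  qed
  moreover have "\<forall>u\<in>V. \<forall>v\<in>V. E u v \<longleftrightarrow> ((f u + 1) mod 5 = f v \<or> (f v + 1) mod 5 = f u)"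
    using d e ne adj_sym adj_irrefl unfolding V f_def by auto
  ultimately show ?thesis unfolding is_cycle_graph_def by blast
qed

end

section \<open>Unicyclic graphs of diameter two\<close>

(* N1 and N2 are the spheres of radius one and two around a vertex c of maximum degree. *)
locale diameter_two_unicyclic = finite_simple_graph +
  fixes c :: 'a
  assumes card_edges: "card (graph_edges E) = card V"
    and diameter_le_2: "\<And>u w. u \<in> V \<Longrightarrow> w \<in> V \<Longrightarrow> dist_le_2 u w"
    and hub_in_V: "c \<in> V"
    and hub_max_degree: "\<And>u. u \<in> V \<Longrightarrow> card (neighbours V E u) \<le> card (neighbours V E c)"
begin

abbreviation "N1 \<equiv> neighbours V E c"
abbreviation "N2 \<equiv> V - insert c N1"

lemma N1_iff: "v \<in> N1 \<longleftrightarrow> E c v"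
  using adj_in_V by (auto simp: neighbours_def)

lemma N1_subset_V: "N1 \<subseteq> V"
  by (auto simp: neighbours_def)

lemma hub_notin_N1: "c \<notin> N1"
  using adj_irrefl by (simp add: N1_iff)

definition parent :: "'a \<Rightarrow> 'a" where
  "parent r = (SOME a. E r a \<and> E a c)"

lemma parent:
  assumes "r \<in> N2"
  shows "E r (parent r)" and "parent r \<in> N1"
proof -
  have "dist_le_2 r c" using assms hub_in_V by (simp add: diameter_le_2)
  moreover have "r \<noteq> c" "\<not> E r c" using assms adj_sym by (auto simp: N1_iff)
  ultimately have "\<exists>a. E r a \<and> E a c" by (auto simp: dist_le_2_def)
  from someI_ex[OF this] show "E r (parent r)" "parent r \<in> N1"
    using adj_sym by (auto simp: parent_def N1_iff)
qed

(* The breadth-first spanning tree rooted at c: one edge for each vertex other than c. *)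
definition tree_edge :: "'a \<Rightarrow> 'a set" where
  "tree_edge v = (if v \<in> N1 then {c, v} else {v, parent v})"

definition tree_edges :: "'a set set" where
  "tree_edges = tree_edge ` (V - {c})"

lemma hub_in_tree_edge_iff: "v \<in> V - {c} \<Longrightarrow> c \<in> tree_edge v \<longleftrightarrow> v \<in> N1"
  using parent(2)[of v] hub_notin_N1 by (auto simp: tree_edge_def)

lemma inj_on_tree_edge: "inj_on tree_edge (V - {c})"
proof (rule inj_onI)
  fix v w assume v: "v \<in> V - {c}" and w: "w \<in> V - {c}" and eq: "tree_edge v = tree_edge w"
  have "v \<in> N1 \<longleftrightarrow> w \<in> N1"
    using hub_in_tree_edge_iff[of v] hub_in_tree_edge_iff[of w] v w eq by simp
  then consider "v \<in> N1" "w \<in> N1" | "v \<in> N2" "w \<in> N2" using v w by blast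
  then show "v = w"
  proof cases
    case 1
    with eq show ?thesis by (auto simp: tree_edge_def doubleton_eq_iff)
  next
    case 2
    with eq parent(2)[of v] parent(2)[of w] show ?thesis
      by (auto simp: tree_edge_def doubleton_eq_iff)
  qed
qed

lemma hub_edge_in_tree_edges: "w \<in> N1 \<Longrightarrow> {c, w} \<in> tree_edges"
  using hub_notin_N1 N1_subset_V by (auto simp: tree_edges_def tree_edge_def intro!: image_eqI[of _ _ w])

lemma tree_edge_cases:
  assumes "{u, v} \<in> tree_edges"
  shows "(u = c \<and> v \<in> N1) \<or> (v = c \<and> u \<in> N1) \<or> (u \<in> N2 \<and> v = parent u) \<or> (v \<in> N2 \<and> u = parent v)"
proof -
  obtain w where w: "w \<in> V - {c}" "{u, v} = tree_edge w"
    using assms by (auto simp: tree_edges_def)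
  then show ?thesis by (cases "w \<in> N1") (auto simp: tree_edge_def doubleton_eq_iff)
qed

lemma tree_edges_subset: "tree_edges \<subseteq> graph_edges E"
proof
  fix e assume "e \<in> tree_edges"
  then obtain v where "v \<in> V - {c}" "e = tree_edge v" by (auto simp: tree_edges_def)
  with parent(1)[of v] show "e \<in> graph_edges E"
    by (cases "v \<in> N1") (auto simp: tree_edge_def graph_edges_def N1_iff)
qed

lemma card_non_tree_edges: "card (graph_edges E - tree_edges) = 1"
proof -
  have "card tree_edges = card V - 1"
    unfolding tree_edges_def using card_image[OF inj_on_tree_edge] hub_in_V finite_V by simp
  moreover have "card V > 0" using hub_in_V finite_V card_gt_0_iff by blast
  ultimately show ?thesis
    using card_Diff_subset[OF finite_subset[OF tree_edges_subset finite_graph_edges] tree_edges_subset]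
      card_edges by simp
qed

lemma non_tree_edge:
  obtains p q where "E p q" "graph_edges E - tree_edges = {{p, q}}"
proof -
  obtain e where e: "graph_edges E - tree_edges = {e}"
    using card_non_tree_edges by (rule card_1_singletonE)
  then have "e \<in> graph_edges E" by (simp add: set_eq_iff) (metis DiffD1)
  then obtain p q where pq: "e = {p, q}" "E p q" by (auto simp: graph_edges_def)
  with that[OF pq(2)] e show ?thesis by simp
qed

end

definition triangle_with_pendant :: "'a set \<Rightarrow> ('a \<Rightarrow> 'a \<Rightarrow> bool) \<Rightarrow> bool" where
  "triangle_with_pendant V E \<longleftrightarrow> (\<exists>c p q t. neighbours V E t = {c}
     \<and> neighbours V E p = {c, q} \<and> neighbours V E q = {c, p})"

lemma triangle_with_pendantI:
  "neighbours V E t = {c} \<Longrightarrow> neighbours V E p = {c, q} \<Longrightarrow> neighbours V E q = {c, p}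
    \<Longrightarrow> triangle_with_pendant V E"
  by (unfold triangle_with_pendant_def) (rule exI conjI | assumption)+

locale diameter_two_unicyclic_extra_edge = diameter_two_unicyclic +
  fixes p q :: 'a
  assumes extra_adj: "E p q" and extra_edge: "graph_edges E - tree_edges = {{p, q}}"
begin

lemma edge_cases:
  assumes "E u v"
  shows "{u, v} = {p, q} \<or> (u = c \<and> v \<in> N1) \<or> (v = c \<and> u \<in> N1)
    \<or> (u \<in> N2 \<and> v = parent u) \<or> (v \<in> N2 \<and> u = parent v)"
proof -
  have "{u, v} \<in> graph_edges E" using assms by (auto simp: graph_edges_def)
  then have "{u, v} = {p, q} \<or> {u, v} \<in> tree_edges" using extra_edge by (metis DiffI singletonD)
  then show ?thesis using tree_edge_cases by blast
qed

lemma extra_not_tree_edge: "{p, q} \<notin> tree_edges"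
  using extra_edge by (metis DiffD2 insertI1)

lemma extra_ne_hub: "p \<noteq> c" "q \<noteq> c"
proof -
  have "{c, w} \<notin> tree_edges" if "{c, w} = {p, q}" for w
    using that extra_not_tree_edge by simp
  then show "p \<noteq> c" "q \<noteq> c"
    using hub_edge_in_tree_edges extra_adj adj_sym by (metis N1_iff insert_commute)+
qed

lemma neighbour_of_N2:
  assumes "r \<in> N2" "E r v"
  shows "v = parent r \<or> {r, v} = {p, q}"
  using edge_cases[OF assms(2)] assms(1) parent(2)[of v] by (auto simp: N1_iff)

lemma neighbour_of_N1:
  assumes "b \<in> N1" "E b v"
  shows "v = c \<or> (v \<in> N2 \<and> b = parent v) \<or> {b, v} = {p, q}"
  using edge_cases[OF assms(2)] assms(1) hub_notin_N1 by auto

lemma N2_reaches_N1: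
  assumes "r \<in> N2" "r \<notin> {p, q}" "b \<in> N1"
  shows "b = parent r \<or> E (parent r) b"
proof -
  have "dist_le_2 r b" using assms N1_subset_V by (auto intro: diameter_le_2)
  moreover have "r \<noteq> b" using assms by auto
  moreover have "v = parent r" if "E r v" for v
    using neighbour_of_N2[OF assms(1) that] assms(2) by (auto simp: doubleton_eq_iff)
  ultimately show ?thesis by (auto simp: dist_le_2_def)
qed

lemma parent_edge_in_tree_edges: "r \<in> N2 \<Longrightarrow> {r, parent r} \<in> tree_edges"
  by (auto simp: tree_edges_def tree_edge_def intro!: image_eqI[of _ _ r])

lemma N1_adjacent:
  assumes "b \<in> N1" "b' \<in> N1" "E b b'"
  shows "{b, b'} = {p, q}"
  using neighbour_of_N1[OF assms(1,3)] assms(2) hub_notin_N1 by auto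

lemma N1_independent:
  assumes "\<not> {p, q} \<subseteq> N1" "b \<in> N1" "b' \<in> N1"
  shows "\<not> E b b'"
  using N1_adjacent[OF assms(2,3)] assms by (auto simp: doubleton_eq_iff)

lemma N1_reached_from_N2:
  assumes "\<not> {p, q} \<subseteq> N1" "r \<in> N2" "b \<in> N1"
  shows "E r b \<or> (\<exists>v \<in> N2. E r v \<and> E v b)"
proof -
  have "dist_le_2 r b" using assms N1_subset_V by (auto intro: diameter_le_2)
  moreover have "v \<in> N2" if "E r v" "E v b" for v
    using that assms N1_independent[OF assms(1) _ assms(3)] adj_in_V adj_sym
    by (auto simp: N1_iff)
  ultimately show ?thesis using assms(2,3) by (auto simp: dist_le_2_def)
qed

lemma N2_subset_extra:
  assumes "\<not> {p, q} \<subseteq> N1" "2 \<le> card N1"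
  shows "N2 \<subseteq> {p, q}"
proof
  fix r assume r: "r \<in> N2"
  show "r \<in> {p, q}"
  proof (rule ccontr)
    assume r_pq: "r \<notin> {p, q}"
    have only_parent: "v = parent r" if "E r v" for v
      using neighbour_of_N2[OF r that] r_pq by (auto simp: doubleton_eq_iff)
    have "b = parent r" if "b \<in> N1" for b
      using N1_reached_from_N2[OF assms(1) r that] only_parent parent(2)[OF r] by auto
    then have "N1 \<subseteq> {parent r}" by blast
    then have "card N1 \<le> 1" using card_mono[of "{parent r}" N1] by simp
    with assms(2) show False by simp
  qed
qed

(* A vertex r of N2 would give its parent the three neighbours c, r and the other end of the
   extra edge, while c itself has at most two. *)
lemma N2_empty_if_extra_in_N1:
  assumes "p \<in> N1" "q \<in> N1"
  shows "N2 = {}"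
proof (rule ccontr)
  assume "N2 \<noteq> {}"
  then obtain r where r: "r \<in> N2" by blast
  define a where "a = parent r"
  have a: "a \<in> N1" "E r a" using parent[OF r] by (simp_all add: a_def)
  have r_pq: "r \<notin> {p, q}" using r assms by auto
  have N1_cases: "b = a \<or> {a, b} = {p, q}" if "b \<in> N1" for b
    using N2_reaches_N1[OF r r_pq that] N1_adjacent[OF a(1) that] by (auto simp: a_def)
  obtain a' where a': "{a, a'} = {p, q}"
    using N1_cases[OF assms(1)] N1_cases[OF assms(2)] extra_adj adj_neq
    by (auto simp: doubleton_eq_iff)
  have "N1 \<subseteq> {a, a'}" using N1_cases a' by auto
  then have "card N1 \<le> card {a, a'}" by (intro card_mono) auto
  moreover have "card {a, a'} \<le> 2" by (cases "a = a'") auto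
  ultimately have "card N1 \<le> 2" by simp
  moreover have "{c, r, a'} \<subseteq> neighbours V E a"
    using a a' extra_adj adj_sym adj_in_V by (auto simp: N1_iff neighbours_def doubleton_eq_iff)
  then have "card {c, r, a'} \<le> card (neighbours V E a)" by (rule card_mono[OF finite_neighbours])
  moreover have "card {c, r, a'} = 3"
    using r r_pq a' extra_ne_hub by (auto simp: doubleton_eq_iff)
  moreover have "card (neighbours V E a) \<le> card N1"
    using hub_max_degree a(1) N1_subset_V by blast
  ultimately show False by simp
qed

lemma extra_in_N1_cases:
  assumes "p \<in> N1" "q \<in> N1"
  shows "is_cycle_graph V E 3 \<or> triangle_with_pendant V E"
proof -
  have V: "V = insert c N1"
    using N2_empty_if_extra_in_N1[OF assms] hub_in_V N1_subset_V by auto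
  have pq: "p \<noteq> q" using extra_adj adj_neq by blast
  show ?thesis
  proof (cases "N1 = {p, q}")
    case True
    have cp: "E c p" "E c q" using assms by (simp_all add: N1_iff)
    have "is_cycle_graph V E 3"
      by (rule is_cycle_graph_3[of c p q])
        (use True V cp pq extra_adj adj_sym hub_notin_N1 in auto)
    then show ?thesis ..
  next
    case False
    then obtain t where t: "t \<in> N1 - {p, q}" using assms by blast
    have adj_iff: "E b v \<longleftrightarrow> v = c \<or> {b, v} = {p, q}" if "b \<in> N1" for b v
      using neighbour_of_N1[OF that, of v] that V extra_adj adj_sym adj_in_V
      by (auto simp: N1_iff doubleton_eq_iff)
    have in_V: "c \<in> V" "p \<in> V" "q \<in> V" using hub_in_V assms N1_subset_V by auto
    have "neighbours V E t = {c}"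
      using adj_iff[of t] t in_V by (auto simp: neighbours_def doubleton_eq_iff)
    moreover have "neighbours V E p = {c, q}" "neighbours V E q = {c, p}"
      using adj_iff assms in_V pq by (auto simp: neighbours_def doubleton_eq_iff)
    ultimately show ?thesis by (blast intro: triangle_with_pendantI)
  qed
qed

lemma extra_between_N1_N2_case:
  assumes "{p', q'} = {p, q}" "p' \<in> N1" "q' \<in> N2"
  shows "is_cycle_graph V E 4"
proof -
  define a where "a = parent q'"
  have a: "a \<in> N1" "E q' a" using parent[OF assms(3)] by (simp_all add: a_def)
  have p'q': "E p' q'" using assms(1) extra_adj adj_sym by (auto simp: doubleton_eq_iff)
  have a_p': "a \<noteq> p'"
    using parent_edge_in_tree_edges[OF assms(3)] extra_not_tree_edge assms(1)
    by (auto simp: a_def insert_commute)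
  have not_in_N1: "\<not> {p, q} \<subseteq> N1" using assms by auto
  note indep = N1_independent[OF not_in_N1]
  have nbr_q': "v = a \<or> v = p'" if "E q' v" for v
    using neighbour_of_N2[OF assms(3) that] assms(1) adj_neq[OF that]
    by (auto simp: a_def doubleton_eq_iff)
  have "N1 = {p', a}"
  proof (intro equalityI subsetI)
    fix b assume b: "b \<in> N1"
    have "dist_le_2 q' b" using assms(3) b N1_subset_V by (auto intro: diameter_le_2)
    then show "b \<in> {p', a}"
      using nbr_q' indep[OF _ b] a(1) assms(2,3) b by (auto simp: dist_le_2_def)
  qed (use a assms in auto)
  moreover have "N2 \<subseteq> {p, q}"
    using N2_subset_extra[OF not_in_N1] \<open>N1 = {p', a}\<close> a_p' by simp
  ultimately have V: "V = {c, p', q', a}"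
    using assms hub_in_V N1_subset_V by (auto simp: doubleton_eq_iff)
  show ?thesis
  proof (rule is_cycle_graph_4[OF V])
    show "distinct [c, p', q', a]" using a a_p' assms hub_notin_N1 by auto
    show "E c p'" "E a c" using assms(2) a(1) adj_sym by (simp_all add: N1_iff)
    show "E p' q'" "E q' a" by (fact p'q', fact a(2))
    show "\<not> E c q'" using assms(3) by (simp add: N1_iff)
    show "\<not> E p' a" using indep assms(2) a(1) by blast
  qed
qed

lemma extra_in_N2_case:
  assumes "p \<in> N2" "q \<in> N2"
  shows "is_cycle_graph V E 5"
proof -
  have not_in_N1: "\<not> {p, q} \<subseteq> N1" using assms by auto
  note indep = N1_independent[OF not_in_N1]
  have pq: "p \<noteq> q" using extra_adj adj_neq by blast
  have nbr_p: "v = parent p \<or> v = q" if "E p v" for v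
    using neighbour_of_N2[OF assms(1) that] by (auto simp: doubleton_eq_iff)
  have nbr_q: "v = parent q \<or> v = p" if "E q v" for v
    using neighbour_of_N2[OF assms(2) that] by (auto simp: doubleton_eq_iff)
  have pp: "parent p \<in> N1" "E p (parent p)" and pq': "parent q \<in> N1" "E q (parent q)"
    using parent assms by auto
  have "2 \<le> card N1"
  proof -
    have "{c, p} \<subseteq> neighbours V E (parent p)"
      using pp assms adj_sym hub_in_V by (auto simp: neighbours_def N1_iff)
    then have "card {c, p} \<le> card (neighbours V E (parent p))"
      by (rule card_mono[OF finite_neighbours])
    moreover have "card (neighbours V E (parent p)) \<le> card N1"
      using hub_max_degree pp(1) N1_subset_V by blast
    moreover have "card {c, p} = 2" using assms by auto
    ultimately show ?thesis by simp
  qed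
  have N1: "N1 = {parent p, parent q}"
  proof (intro equalityI subsetI)
    fix b assume b: "b \<in> N1"
    show "b \<in> {parent p, parent q}"
      using N1_reached_from_N2[OF not_in_N1 assms(1) b]
    proof (elim disjE bexE conjE)
      assume "E p b"
      then show ?thesis using nbr_p assms b by blast
    next
      fix v assume "v \<in> N2" "E p v" "E v b"
      then have "v = q" using nbr_p pp(1) by blast
      with \<open>E v b\<close> show ?thesis using nbr_q assms b by blast
    qed
  qed (use pp pq' in auto)
  then have pp_pq: "parent p \<noteq> parent q" using \<open>2 \<le> card N1\<close> by auto
  have "V = insert c (N1 \<union> N2)" using hub_in_V N1_subset_V by auto
  also have "N2 = {p, q}" using N2_subset_extra[OF not_in_N1 \<open>2 \<le> card N1\<close>] assms by auto
  finally have V: "V = {c, parent p, p, q, parent q}" using N1 by auto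
  show ?thesis
  proof (rule is_cycle_graph_5[OF V])
    show "distinct [c, parent p, p, q, parent q]"
      using assms pp(1) pq'(1) pq pp_pq hub_notin_N1 by auto
    show "E c (parent p)" "E (parent q) c" using pp(1) pq'(1) adj_sym by (simp_all add: N1_iff)
    show "E (parent p) p" "E p q" "E q (parent q)" using pp(2) pq'(2) extra_adj adj_sym by auto
    show "\<not> E c p" "\<not> E c q" using assms by (simp_all add: N1_iff)
    show "\<not> E (parent p) (parent q)" using indep pp(1) pq'(1) by blast
    show "\<not> E (parent p) q"
    proof
      assume "E (parent p) q"
      from nbr_q[OF adj_sym[OF this]] show False using pp_pq pp(1) assms(1) by auto
    qed
    show "\<not> E p (parent q)"
    proof
      assume "E p (parent q)"
      from nbr_p[OF this] show False using pp_pq pq'(1) assms(2) by auto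
    qed
  qed
qed

end

theorem (in finite_simple_graph) unicyclic_dist_le_2_cases:
  assumes "card (graph_edges E) = card V" "V \<noteq> {}"
    and "\<And>u w. u \<in> V \<Longrightarrow> w \<in> V \<Longrightarrow> dist_le_2 u w"
  shows "is_cycle_graph V E 3 \<or> is_cycle_graph V E 4 \<or> is_cycle_graph V E 5
    \<or> triangle_with_pendant V E"
proof -
  define m where "m = Max ((\<lambda>u. card (neighbours V E u)) ` V)"
  have "m \<in> (\<lambda>u. card (neighbours V E u)) ` V"
    unfolding m_def using finite_V assms(2) by (intro Max_in) auto
  then obtain c where c: "c \<in> V" "card (neighbours V E c) = m" by auto
  interpret diameter_two_unicyclic V E c
    using assms c finite_V by unfold_locales (auto simp: m_def)
  obtain p q where "E p q" "graph_edges E - tree_edges = {{p, q}}" by (rule non_tree_edge)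
  then interpret diameter_two_unicyclic_extra_edge V E c p q by unfold_locales
  have "p \<in> N1 \<or> p \<in> N2" "q \<in> N1 \<or> q \<in> N2"
    using extra_adj adj_in_V extra_ne_hub by auto
  then consider "p \<in> N1" "q \<in> N1" | "p \<in> N1" "q \<in> N2" | "q \<in> N1" "p \<in> N2"
    | "p \<in> N2" "q \<in> N2"
    by blast
  then show ?thesis
  proof cases
    case 1
    then show ?thesis using extra_in_N1_cases by blast
  next
    case 2
    then show ?thesis using extra_between_N1_N2_case[of p q] by simp
  next
    case 3
    then show ?thesis using extra_between_N1_N2_case[of q p] by (simp add: insert_commute)
  next
    case 4
    then show ?thesis using extra_in_N2_case by simp
  qed
qed

section \<open>Spectra of the small graphs\<close>

lemma mod_succ_eq_iff:
  fixes i j n :: nat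
  assumes "i < n" "j < n"
  shows "(j + 1) mod n = i \<longleftrightarrow> j = (i + n - 1) mod n"
proof (cases "j + 1 = n")
  case True
  with assms show ?thesis by (cases i) (auto simp: mod_if)
next
  case False
  with assms show ?thesis by (cases i) (auto simp: mod_if)
qed

lemma mod_succ_ne_mod_pred:
  fixes i n :: nat
  assumes "i < n" "3 \<le> n"
  shows "(i + 1) mod n \<noteq> (i + n - 1) mod n"
  using assms by (cases "i + 1 = n"; cases i) (auto simp: mod_if)

lemma all_less_3: "(\<forall>i<3::nat. P i) \<longleftrightarrow> P 0 \<and> P 1 \<and> P 2"
  and all_less_4: "(\<forall>i<4::nat. P i) \<longleftrightarrow> P 0 \<and> P 1 \<and> P 2 \<and> P 3"
  and all_less_5: "(\<forall>i<5::nat. P i) \<longleftrightarrow> P 0 \<and> P 1 \<and> P 2 \<and> P 3 \<and> P 4"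
  and ex_less_3: "(\<exists>i<3::nat. P i) \<longleftrightarrow> P 0 \<or> P 1 \<or> P 2"
  and ex_less_4: "(\<exists>i<4::nat. P i) \<longleftrightarrow> P 0 \<or> P 1 \<or> P 2 \<or> P 3"
  and ex_less_5: "(\<exists>i<5::nat. P i) \<longleftrightarrow> P 0 \<or> P 1 \<or> P 2 \<or> P 3 \<or> P 4"
  by (auto simp: less_Suc_eq numeral_eq_Suc)

context finite_simple_graph
begin

lemma is_cycle_graph_enumeration:
  fixes n :: nat
  assumes "is_cycle_graph V E n"
  obtains g where "bij_betw g {..<n} V"
    "\<And>i j. i < n \<Longrightarrow> j < n \<Longrightarrow> E (g i) (g j) \<longleftrightarrow> ((i + 1) mod n = j \<or> (j + 1) mod n = i)"
proof -
  obtain f where bij: "bij_betw f V {..<n}"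
    and adj: "\<forall>u\<in>V. \<forall>v\<in>V. E u v \<longleftrightarrow> ((f u + 1) mod n = f v \<or> (f v + 1) mod n = f u)"
    using assms by (auto simp: is_cycle_graph_def)
  define g where "g = inv_into V f"
  have g: "bij_betw g {..<n} V" unfolding g_def by (rule bij_betw_inv_into[OF bij])
  have fg: "f (g i) = i" and gV: "g i \<in> V" if "i < n" for i
    using bij_betw_inv_into_right[OF bij] that g by (auto simp: g_def bij_betw_def)
  show ?thesis
  proof (rule that[OF g])
    fix i j :: nat assume "i < n" "j < n"
    then show "E (g i) (g j) \<longleftrightarrow> ((i + 1) mod n = j \<or> (j + 1) mod n = i)"
      using adj gV fg by simp
  qed
qed

lemma cycle_neighbours:
  fixes g :: "nat \<Rightarrow> 'a"
  assumes g: "bij_betw g {..<n} V"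
    and adj: "\<And>i j. i < n \<Longrightarrow> j < n \<Longrightarrow> E (g i) (g j) \<longleftrightarrow> ((i + 1) mod n = j \<or> (j + 1) mod n = i)"
    and "i < n"
  shows "neighbours V E (g i) = {g ((i + 1) mod n), g ((i + n - 1) mod n)}"
proof -
  have "n \<noteq> 0" using \<open>i < n\<close> by simp
  have "v \<in> neighbours V E (g i) \<longleftrightarrow> v = g ((i + 1) mod n) \<or> v = g ((i + n - 1) mod n)" for v
  proof
    assume "v \<in> neighbours V E (g i)"
    then obtain j where "j < n" "v = g j" "E (g i) (g j)"
      using g by (auto simp: neighbours_def bij_betw_def)
    then have "(i + 1) mod n = j \<or> j = (i + n - 1) mod n"
      using adj[OF \<open>i < n\<close> \<open>j < n\<close>] mod_succ_eq_iff[OF \<open>i < n\<close> \<open>j < n\<close>] by simp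
    with \<open>v = g j\<close> show "v = g ((i + 1) mod n) \<or> v = g ((i + n - 1) mod n)" by auto
  next
    assume "v = g ((i + 1) mod n) \<or> v = g ((i + n - 1) mod n)"
    then show "v \<in> neighbours V E (g i)"
      using adj[of i] \<open>i < n\<close> \<open>n \<noteq> 0\<close> g mod_succ_eq_iff[of i n "(i + n - 1) mod n"]
      by (auto simp: neighbours_def bij_betw_def)
  qed
  then show ?thesis by blast
qed

lemma cycle_mat_vec:
  fixes x :: "'a \<Rightarrow> real" and g :: "nat \<Rightarrow> 'a"
  assumes g: "bij_betw g {..<n} V"
    and adj: "\<And>i j. i < n \<Longrightarrow> j < n \<Longrightarrow> E (g i) (g j) \<longleftrightarrow> ((i + 1) mod n = j \<or> (j + 1) mod n = i)"
    and "3 \<le> n" "i < n"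
  shows "mat_vec x (g i) = x (g i) - (x (g ((i + 1) mod n)) + x (g ((i + n - 1) mod n))) / 2"
proof -
  have "n \<noteq> 0" using \<open>i < n\<close> by simp
  have ne: "g ((j + 1) mod n) \<noteq> g ((j + n - 1) mod n)" if "j < n" for j
    using mod_succ_ne_mod_pred[OF that \<open>3 \<le> n\<close>] g \<open>n \<noteq> 0\<close> that
    by (auto simp: bij_betw_def inj_on_eq_iff)
  have deg2: "card (neighbours V E v) = 2" if "v \<in> V" for v
  proof -
    have "v \<in> g ` {..<n}" using g that by (simp add: bij_betw_def)
    then obtain j where "j < n" "v = g j" by auto
    then show ?thesis using cycle_neighbours[OF g adj] ne by simp
  qed
  have "g i \<in> V" using g \<open>i < n\<close> by (auto simp: bij_betw_def)
  have half: "nlap V E (g i) v = - 1 / 2" if "v \<in> neighbours V E (g i)" for v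
  proof -
    have "E (g i) v" "v \<in> V" using that by (auto simp: neighbours_def)
    then show ?thesis using deg2[OF \<open>g i \<in> V\<close>] deg2[OF \<open>v \<in> V\<close>] by (simp add: nlap_adjacent)
  qed
  have nbrs: "neighbours V E (g i) = {g ((i + 1) mod n), g ((i + n - 1) mod n)}"
    by (rule cycle_neighbours[OF g adj \<open>i < n\<close>])
  then have "nlap V E (g i) (g ((i + 1) mod n)) = - 1 / 2" "nlap V E (g i) (g ((i + n - 1) mod n)) = - 1 / 2"
    using half by auto
  with ne[OF \<open>i < n\<close>] \<open>g i \<in> V\<close> show ?thesis
    by (simp add: mat_vec_neighbours nbrs) (simp add: field_simps)
qed

lemma cycle_nlap_eigenvalue_iff:
  fixes n :: nat
  assumes "is_cycle_graph V E n" "3 \<le> n"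
  shows "nlap_eigenvalue V E \<mu> \<longleftrightarrow> (\<exists>y. (\<exists>i<n. y i \<noteq> 0)
    \<and> (\<forall>i<n. y i - (y ((i + 1) mod n) + y ((i + n - 1) mod n)) / 2 = \<mu> * y i))"
proof -
  obtain g where g: "bij_betw g {..<n} V"
    and adj: "\<And>i j. i < n \<Longrightarrow> j < n \<Longrightarrow> E (g i) (g j) \<longleftrightarrow> ((i + 1) mod n = j \<or> (j + 1) mod n = i)"
    using is_cycle_graph_enumeration[OF assms(1)] by blast
  have "n \<noteq> 0" using assms(2) by simp
  note mv = cycle_mat_vec[OF g adj assms(2)]
  have V: "V = g ` {..<n}" using g by (simp add: bij_betw_def)
  show ?thesis
  proof
    assume "nlap_eigenvalue V E \<mu>"
    then obtain x where x: "\<exists>u\<in>V. x u \<noteq> 0" "\<forall>u\<in>V. mat_vec x u = \<mu> * x u"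
      by (auto simp: nlap_eigenvalue_iff_mat_vec)
    show "\<exists>y. (\<exists>i<n. y i \<noteq> 0) \<and> (\<forall>i<n. y i - (y ((i + 1) mod n) + y ((i + n - 1) mod n)) / 2 = \<mu> * y i)"
    proof (rule exI[of _ "\<lambda>i. x (g i)"], rule conjI)
      show "\<exists>i<n. x (g i) \<noteq> 0" using x(1) V by auto
      show "\<forall>i<n. x (g i) - (x (g ((i + 1) mod n)) + x (g ((i + n - 1) mod n))) / 2 = \<mu> * x (g i)"
        using x(2) V mv by auto
    qed
  next
    assume "\<exists>y. (\<exists>i<n. y i \<noteq> 0) \<and> (\<forall>i<n. y i - (y ((i + 1) mod n) + y ((i + n - 1) mod n)) / 2 = \<mu> * y i)"
    then obtain y where y: "\<exists>i<n. y i \<noteq> 0"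
      "\<forall>i<n. y i - (y ((i + 1) mod n) + y ((i + n - 1) mod n)) / 2 = \<mu> * y i" by blast
    define x where "x = y \<circ> inv_into {..<n} g"
    have xg: "x (g i) = y i" if "i < n" for i
      using g that by (simp add: x_def bij_betw_def)
    have "mat_vec x u = \<mu> * x u" if "u \<in> V" for u
    proof -
      have "u \<in> g ` {..<n}" using that V by simp
      then obtain i where "i < n" "u = g i" by auto
      with y(2) \<open>n \<noteq> 0\<close> show ?thesis by (simp add: mv xg)
    qed
    moreover have "\<exists>u\<in>V. x u \<noteq> 0" using y(1) V xg by force
    ultimately show "nlap_eigenvalue V E \<mu>" by (auto simp: nlap_eigenvalue_iff_mat_vec)
  qed
qed

lemma cycle3_nlap_eigenvalue_iff:
  assumes "is_cycle_graph V E 3"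
  shows "nlap_eigenvalue V E \<mu> \<longleftrightarrow> (\<exists>y :: nat \<Rightarrow> real. (y 0 \<noteq> 0 \<or> y 1 \<noteq> 0 \<or> y 2 \<noteq> 0)
    \<and> y 0 - (y 1 + y 2) / 2 = \<mu> * y 0 \<and> y 1 - (y 2 + y 0) / 2 = \<mu> * y 1
    \<and> y 2 - (y 0 + y 1) / 2 = \<mu> * y 2)"
proof -
  have n: "3 \<le> (3::nat)" by simp
  show ?thesis
    unfolding cycle_nlap_eigenvalue_iff[OF assms n] all_less_3 ex_less_3
    by (simp del: One_nat_def add: One_nat_def[symmetric])
qed

lemma cycle4_nlap_eigenvalue_iff:
  assumes "is_cycle_graph V E 4"
  shows "nlap_eigenvalue V E \<mu> \<longleftrightarrow> (\<exists>y :: nat \<Rightarrow> real. (y 0 \<noteq> 0 \<or> y 1 \<noteq> 0 \<or> y 2 \<noteq> 0 \<or> y 3 \<noteq> 0)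
    \<and> y 0 - (y 1 + y 3) / 2 = \<mu> * y 0 \<and> y 1 - (y 2 + y 0) / 2 = \<mu> * y 1
    \<and> y 2 - (y 3 + y 1) / 2 = \<mu> * y 2 \<and> y 3 - (y 0 + y 2) / 2 = \<mu> * y 3)"
proof -
  have n: "3 \<le> (4::nat)" by simp
  show ?thesis
    unfolding cycle_nlap_eigenvalue_iff[OF assms n] all_less_4 ex_less_4
    by (simp del: One_nat_def add: One_nat_def[symmetric])
qed

lemma cycle5_nlap_eigenvalue_iff:
  assumes "is_cycle_graph V E 5"
  shows "nlap_eigenvalue V E \<mu> \<longleftrightarrow> (\<exists>y :: nat \<Rightarrow> real. (y 0 \<noteq> 0 \<or> y 1 \<noteq> 0 \<or> y 2 \<noteq> 0 \<or> y 3 \<noteq> 0 \<or> y 4 \<noteq> 0)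
    \<and> y 0 - (y 1 + y 4) / 2 = \<mu> * y 0 \<and> y 1 - (y 2 + y 0) / 2 = \<mu> * y 1
    \<and> y 2 - (y 3 + y 1) / 2 = \<mu> * y 2 \<and> y 3 - (y 4 + y 2) / 2 = \<mu> * y 3
    \<and> y 4 - (y 0 + y 3) / 2 = \<mu> * y 4)"
proof -
  have n: "3 \<le> (5::nat)" by simp
  show ?thesis
    unfolding cycle_nlap_eigenvalue_iff[OF assms n] all_less_5 ex_less_5
    by (simp del: One_nat_def add: One_nat_def[symmetric])
qed

lemma cycle3_nlap_eigenvalues:
  assumes "is_cycle_graph V E 3"
  shows "{\<mu>. nlap_eigenvalue V E \<mu>} \<subseteq> {0, 3 / 2}"
proof
  fix \<mu> assume "\<mu> \<in> {\<mu>. nlap_eigenvalue V E \<mu>}"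
  then obtain y :: "nat \<Rightarrow> real" where y: "y 0 \<noteq> 0 \<or> y 1 \<noteq> 0 \<or> y 2 \<noteq> 0"
    and eq: "y 0 - (y 1 + y 2) / 2 = \<mu> * y 0" "y 1 - (y 2 + y 0) / 2 = \<mu> * y 1"
      "y 2 - (y 0 + y 1) / 2 = \<mu> * y 2"
    using cycle3_nlap_eigenvalue_iff[OF assms] by auto
  have "\<mu> * (3 - 2 * \<mu>) * y 0 = 0" "\<mu> * (3 - 2 * \<mu>) * y 1 = 0" "\<mu> * (3 - 2 * \<mu>) * y 2 = 0"
    using eq by algebra+
  with y have "\<mu> * (3 - 2 * \<mu>) = 0" by auto
  then show "\<mu> \<in> {0, 3 / 2}" by auto
qed

lemma cycle4_nlap_eigenvalues:
  assumes "is_cycle_graph V E 4"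
  shows "{\<mu>. nlap_eigenvalue V E \<mu>} = {0, 1, 2}"
proof (intro equalityI subsetI)
  fix \<mu> assume "\<mu> \<in> {\<mu>. nlap_eigenvalue V E \<mu>}"
  then obtain y :: "nat \<Rightarrow> real" where y: "y 0 \<noteq> 0 \<or> y 1 \<noteq> 0 \<or> y 2 \<noteq> 0 \<or> y 3 \<noteq> 0"
    and eq: "y 0 - (y 1 + y 3) / 2 = \<mu> * y 0" "y 1 - (y 2 + y 0) / 2 = \<mu> * y 1"
      "y 2 - (y 3 + y 1) / 2 = \<mu> * y 2" "y 3 - (y 0 + y 2) / 2 = \<mu> * y 3"
    using cycle4_nlap_eigenvalue_iff[OF assms] by auto
  have "\<mu> * (\<mu> - 1) * (\<mu> - 2) * y 0 = 0" "\<mu> * (\<mu> - 1) * (\<mu> - 2) * y 1 = 0"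
    "\<mu> * (\<mu> - 1) * (\<mu> - 2) * y 2 = 0" "\<mu> * (\<mu> - 1) * (\<mu> - 2) * y 3 = 0"
    using eq by algebra+
  with y have "\<mu> * (\<mu> - 1) * (\<mu> - 2) = 0" by auto
  then show "\<mu> \<in> {0, 1, 2}" by auto
next
  fix \<mu> :: real assume "\<mu> \<in> {0, 1, 2}"
  moreover have "nlap_eigenvalue V E 0" "nlap_eigenvalue V E 1" "nlap_eigenvalue V E 2"
    unfolding cycle4_nlap_eigenvalue_iff[OF assms]
    by (rule exI[of _ "\<lambda>i. [1, 1, 1, 1] ! i"] exI[of _ "\<lambda>i. [1, 0, -1, 0] ! i"]
        exI[of _ "\<lambda>i. [1, -1, 1, -1] ! i"]; simp)+
  ultimately show "\<mu> \<in> {\<mu>. nlap_eigenvalue V E \<mu>}" by auto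
qed

lemma cycle5_nlap_eigenvalues:
  assumes "is_cycle_graph V E 5"
  shows "{\<mu>. nlap_eigenvalue V E \<mu>} = {\<mu>. \<mu> * (4 * \<mu>\<^sup>2 - 10 * \<mu> + 5) = 0}"
proof (intro equalityI subsetI)
  fix \<mu> assume "\<mu> \<in> {\<mu>. nlap_eigenvalue V E \<mu>}"
  then obtain y :: "nat \<Rightarrow> real"
    where y: "y 0 \<noteq> 0 \<or> y 1 \<noteq> 0 \<or> y 2 \<noteq> 0 \<or> y 3 \<noteq> 0 \<or> y 4 \<noteq> 0"
    and eq: "y 0 - (y 1 + y 4) / 2 = \<mu> * y 0" "y 1 - (y 2 + y 0) / 2 = \<mu> * y 1"
      "y 2 - (y 3 + y 1) / 2 = \<mu> * y 2" "y 3 - (y 4 + y 2) / 2 = \<mu> * y 3"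
      "y 4 - (y 0 + y 3) / 2 = \<mu> * y 4"
    using cycle5_nlap_eigenvalue_iff[OF assms] by auto
  have "\<mu> * (4 * \<mu>\<^sup>2 - 10 * \<mu> + 5) * y 0 = 0" "\<mu> * (4 * \<mu>\<^sup>2 - 10 * \<mu> + 5) * y 1 = 0"
    "\<mu> * (4 * \<mu>\<^sup>2 - 10 * \<mu> + 5) * y 2 = 0" "\<mu> * (4 * \<mu>\<^sup>2 - 10 * \<mu> + 5) * y 3 = 0"
    "\<mu> * (4 * \<mu>\<^sup>2 - 10 * \<mu> + 5) * y 4 = 0"
    using eq by algebra+
  with y have "\<mu> * (4 * \<mu>\<^sup>2 - 10 * \<mu> + 5) = 0" by auto
  then show "\<mu> \<in> {\<mu>. \<mu> * (4 * \<mu>\<^sup>2 - 10 * \<mu> + 5) = 0}" by simp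
next
  fix \<mu> :: real assume "\<mu> \<in> {\<mu>. \<mu> * (4 * \<mu>\<^sup>2 - 10 * \<mu> + 5) = 0}"
  then consider "\<mu> = 0" | "4 * \<mu>\<^sup>2 - 10 * \<mu> + 5 = 0" by auto
  then have "nlap_eigenvalue V E \<mu>"
  proof cases
    case 1
    show ?thesis unfolding 1 cycle5_nlap_eigenvalue_iff[OF assms]
      by (rule exI[of _ "\<lambda>_. 1"]) simp
  next
    case 2
    \<comment> \<open>The eigenvector is symmetric about vertex 0, with t = 2 cos(2\<pi>/5) or 2 cos(4\<pi>/5).\<close>
    define t where "t = 2 - 2 * \<mu>"
    have "2 - (t + t) / 2 = \<mu> * 2" "t - (t\<^sup>2 - 2 + 2) / 2 = \<mu> * t"
      "t\<^sup>2 - 2 - (t\<^sup>2 - 2 + t) / 2 = \<mu> * (t\<^sup>2 - 2)" "t\<^sup>2 - 2 - (t + (t\<^sup>2 - 2)) / 2 = \<mu> * (t\<^sup>2 - 2)"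
      using 2 unfolding t_def by algebra+
    moreover have "t - (2 + (t\<^sup>2 - 2)) / 2 = \<mu> * t"
      unfolding t_def by (simp add: power2_eq_square field_simps)
    ultimately show ?thesis unfolding cycle5_nlap_eigenvalue_iff[OF assms]
      by (intro exI[of _ "\<lambda>i. [2, t, t\<^sup>2 - 2, t\<^sup>2 - 2, t] ! i"]) simp
  qed
  then show "\<mu> \<in> {\<mu>. nlap_eigenvalue V E \<mu>}" by simp
qed

end

lemma card_cycle5_eigenvalues: "card {\<mu>::real. \<mu> * (4 * \<mu>\<^sup>2 - 10 * \<mu> + 5) = 0} = 3"
proof -
  have "4 * \<mu>\<^sup>2 - 10 * \<mu> + 5 = 4 * (\<mu> - (5 - sqrt 5) / 4) * (\<mu> - (5 + sqrt 5) / 4)" for \<mu> :: real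
    by (simp add: power2_eq_square field_simps)
  then have "{\<mu>::real. \<mu> * (4 * \<mu>\<^sup>2 - 10 * \<mu> + 5) = 0} = {0, (5 - sqrt 5) / 4, (5 + sqrt 5) / 4}"
    by auto
  moreover have "sqrt 5 < sqrt (5\<^sup>2 :: real)" by (subst real_sqrt_less_iff) simp
  then have "(5 - sqrt 5) / 4 \<noteq> (0::real)" "(5 + sqrt 5) / 4 \<noteq> (0::real)"
    "(5 - sqrt 5) / 4 \<noteq> (5 + sqrt 5) / (4::real)"
    using real_sqrt_ge_zero[of 5] by (simp_all, linarith)
  ultimately show ?thesis by simp
qed

context finite_simple_graph
begin

lemma mat_vec_supported:
  fixes x :: "'a \<Rightarrow> real"
  assumes "S \<subseteq> V" "\<And>v. v \<notin> S \<Longrightarrow> x v = 0"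
  shows "mat_vec x u = (\<Sum>v\<in>S. nlap V E u v * x v)"
proof -
  have "(\<Sum>v\<in>V. nlap V E u v * x v) = (\<Sum>v\<in>S. nlap V E u v * x v)"
    using assms finite_V by (intro sum.mono_neutral_right) auto
  then show ?thesis by (simp add: mat_vec_def)
qed

end

locale triangle_with_pendant_graph = finite_simple_graph +
  fixes c p q t :: 'a
  assumes neighbours_t: "neighbours V E t = {c}"
    and neighbours_p: "neighbours V E p = {c, q}"
    and neighbours_q: "neighbours V E q = {c, p}"
begin

lemma adjacent: "E t c" "E p c" "E p q" "E q c"
  using neighbours_t neighbours_p neighbours_q by (auto simp: neighbours_def)

lemma in_V: "c \<in> V" "p \<in> V" "q \<in> V" "t \<in> V"
  using adjacent adj_in_V by auto

lemma distinct: "distinct [c, p, q, t]"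
  using adjacent adj_irrefl neighbours_t neighbours_p neighbours_q by auto

lemma nlap_values:
  defines "d \<equiv> card (neighbours V E c)"
  shows "nlap V E t c = - 1 / sqrt d" and "nlap V E p c = - 1 / sqrt (2 * d)"
    and "nlap V E q c = - 1 / sqrt (2 * d)" and "nlap V E p q = - 1 / 2"
  using distinct by (simp_all add: nlap_adjacent adjacent neighbours_t neighbours_p neighbours_q d_def)

lemma nlap_eigenvalue_3_2: "nlap_eigenvalue V E (3 / 2)"
proof -
  define x :: "'a \<Rightarrow> real" where "x z = (if z = p then 1 else if z = q then -1 else 0)" for z
  have "mat_vec x u = nlap V E u p - nlap V E u q" for u
    using in_V distinct by (subst mat_vec_supported[of "{p, q}"]) (auto simp: x_def)
  moreover have "nlap V E u p - nlap V E u q = 3 / 2 * x u" for u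
  proof -
    consider "u = p" | "u = q" | "u = c" | "u \<notin> {p, q, c}" by blast
    then show ?thesis
    proof cases
      case 3
      then show ?thesis using nlap_values(2,3) distinct by (simp add: nlap_sym[of c] x_def)
    next
      case 4
      then have "u \<notin> neighbours V E p" "u \<notin> neighbours V E q"
        using neighbours_p neighbours_q by auto
      then have "\<not> E u p" "\<not> E u q" using adj_sym adj_in_V by (auto simp: neighbours_def)
      with 4 show ?thesis by (simp add: nlap_nonadjacent x_def)
    qed (use nlap_values(4) distinct in \<open>auto simp: nlap_sym[of q p] x_def\<close>)
  qed
  ultimately show ?thesis
    unfolding nlap_eigenvalue_iff_mat_vec using in_V distinct
    by (intro exI[of _ x]) (auto simp: x_def)
qed

(* If 0, 3/2 and r were the only eigenvalues, L (L - 3/2) (L - r) would annihilate the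
   indicator vector of the pendant vertex t; its entries at p and at t say r = 1 and r <> 1. *)
lemma card_nlap_eigenvalues_ne_3: "card {\<mu>. nlap_eigenvalue V E \<mu>} \<noteq> 3"
proof
  assume card3: "card {\<mu>. nlap_eigenvalue V E \<mu>} = 3"
  define S where "S = {\<mu>. nlap_eigenvalue V E \<mu>}"
  have "finite S" using card3 card.infinite unfolding S_def by force
  moreover have sub: "{0, 3 / 2} \<subseteq> S"
    using nlap_eigenvalue_0[OF adjacent(1)] nlap_eigenvalue_3_2 by (simp add: S_def)
  ultimately have "card (S - {0, 3 / 2}) = 1"
    using card3 by (simp add: card_Diff_subset S_def)
  then obtain r where r: "S - {0, 3 / 2} = {r}" by (rule card_1_singletonE)
  have eigs: "\<mu> \<in> set [0, 3 / 2, r]" if "eigenvalue \<mu>" for \<mu>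
  proof -
    have "\<mu> \<in> S - {0, 3 / 2} \<or> \<mu> \<in> {0, 3 / 2}"
      using that by (auto simp: S_def eigenvalue_iff_nlap_eigenvalue)
    then show ?thesis unfolding r by auto
  qed
  define d where "d = real (card (neighbours V E c))"
  define a where "a = 1 / sqrt (2 * d)"
  define b where "b = 1 / sqrt d"
  have "0 < d"
    using degree_pos[OF adj_sym[OF adjacent(1)]] by (simp add: d_def degree_eq_card_neighbours)
  then have "0 < a" "0 < b" by (simp_all add: a_def b_def)
  have nlap: "nlap V E t c = - b" "nlap V E c t = - b" "nlap V E p c = - a" "nlap V E q c = - a"
    "nlap V E c p = - a" "nlap V E p q = - 1 / 2"
    using nlap_values nlap_sym[of c t] nlap_sym[of c p] by (simp_all add: a_def b_def d_def)
  define e :: "'a \<Rightarrow> real" where "e z = (if z = t then 1 else 0)" for z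
  define f1 where "f1 = shift r e"
  define f2 where "f2 = shift (3 / 2) f1"
  have f1: "f1 z = nlap V E z t - r * e z" for z
    by (simp add: f1_def shift_def e_def[abs_def] mat_vec_indicator[OF in_V(4)])
  have f1_zero: "f1 z = 0" if "z \<notin> {t, c}" for z
  proof -
    have "z \<notin> neighbours V E t" using that neighbours_t by auto
    then have "\<not> E z t" using adj_sym[of z t] adj_in_V[of z t] by (auto simp: neighbours_def)
    with that show ?thesis by (simp add: f1 e_def nlap_nonadjacent)
  qed
  have mat_vec_f1: "mat_vec f1 z = nlap V E z t * f1 t + nlap V E z c * f1 c" for z
    using in_V distinct f1_zero by (subst mat_vec_supported[of "{t, c}"]) auto
  have f1_t: "f1 t = 1 - r" and f1_c: "f1 c = - b"
    using distinct nlap by (simp_all add: f1 e_def)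
  have f2: "f2 z = nlap V E z t * (1 - r) - nlap V E z c * b - 3 / 2 * f1 z" for z
    by (simp add: f2_def shift_def mat_vec_f1 f1_t f1_c)
  have "t \<notin> neighbours V E p" "t \<notin> neighbours V E q"
    using distinct neighbours_p neighbours_q by auto
  then have "nlap V E p t = 0" "nlap V E q t = 0"
    using distinct in_V by (auto intro!: nlap_nonadjacent simp: neighbours_def)
  moreover have "f1 p = 0" "f1 q = 0" using distinct f1_zero[of p] f1_zero[of q] by auto
  ultimately have f2_p: "f2 p = a * b" and f2_q: "f2 q = a * b"
    using nlap by (simp_all add: f2)
  have f2_c: "f2 c = b * (r - 1 / 2)" and f2_t: "f2 t = b * b - (1 - r) / 2"
    using distinct nlap by (simp_all add: f2 f1_t f1_c field_simps)
  have "shift_prod [0, 3 / 2, r] e u = 0" if "u \<in> V" for u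
    using eigs that by (rule shift_prod_eq_0)
  then have mat_vec_f2: "mat_vec f2 u = 0" if "u \<in> V" for u
    using that by (simp add: shift_def f1_def f2_def)
  have "mat_vec f2 p = f2 p + nlap V E p c * f2 c + nlap V E p q * f2 q"
    using distinct by (simp add: mat_vec_neighbours[OF in_V(2)] neighbours_p)
  then have "a * b * (1 - r) = 0"
    using mat_vec_f2[OF in_V(2)] f2_p f2_q f2_c nlap by (simp add: algebra_simps)
  then have "r = 1" using \<open>0 < a\<close> \<open>0 < b\<close> by simp
  have "mat_vec f2 t = f2 t + nlap V E t c * f2 c"
    by (simp add: mat_vec_neighbours[OF in_V(4)] neighbours_t)
  then have "b * b / 2 = 0"
    using mat_vec_f2[OF in_V(4)] f2_t f2_c nlap \<open>r = 1\<close> by (simp add: algebra_simps)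
  with \<open>0 < b\<close> show False by simp
qed

end

lemma (in finite_simple_graph) card_nlap_eigenvalues_cycle3:
  assumes "is_cycle_graph V E 3"
  shows "card {\<mu>. nlap_eigenvalue V E \<mu>} \<le> 2"
proof -
  have "card {\<mu>. nlap_eigenvalue V E \<mu>} \<le> card {0, 3 / 2 :: real}"
    by (intro card_mono cycle3_nlap_eigenvalues[OF assms]) auto
  then show ?thesis by simp
qed

lemma (in finite_simple_graph) card_nlap_eigenvalues_triangle_with_pendant:
  assumes "triangle_with_pendant V E"
  shows "card {\<mu>. nlap_eigenvalue V E \<mu>} \<noteq> 3"
proof -
  obtain c p q t where "neighbours V E t = {c}" "neighbours V E p = {c, q}"
    "neighbours V E q = {c, p}"
    using assms unfolding triangle_with_pendant_def by blast
  then interpret triangle_with_pendant_graph V E c p q t by unfold_locales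
  show ?thesis by (rule card_nlap_eigenvalues_ne_3)
qed

theorem theorem4p1:
  fixes V :: "'a set" and E :: "'a \<Rightarrow> 'a \<Rightarrow> bool"
  assumes "unicyclic V E"
  shows "card {\<mu>. nlap_eigenvalue V E \<mu>} = 3 \<longleftrightarrow> is_cycle_graph V E 4 \<or> is_cycle_graph V E 5"
proof -
  have conn: "connected_graph V E" and edges: "card (graph_edges E) = card V"
    and "simple_graph V E"
    using assms by (auto simp: unicyclic_def)
  then interpret finite_simple_graph V E by unfold_locales
  show ?thesis
  proof
    assume three: "card {\<mu>. nlap_eigenvalue V E \<mu>} = 3"
    then obtain r1 r2 r3 where spectrum: "{\<mu>. nlap_eigenvalue V E \<mu>} = {r1, r2, r3}"
      by (auto simp: card_3_iff)
    have "dist_le_2 u w" if "u \<in> V" "w \<in> V" for u w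
      using spectrum by (intro dist_le_2_if_three_eigenvalues[OF conn _ that]) auto
    moreover have "V \<noteq> {}" using conn by (simp add: connected_graph_def)
    ultimately have "is_cycle_graph V E 3 \<or> is_cycle_graph V E 4 \<or> is_cycle_graph V E 5
        \<or> triangle_with_pendant V E"
      by (intro unicyclic_dist_le_2_cases[OF edges])
    then show "is_cycle_graph V E 4 \<or> is_cycle_graph V E 5"
      using three card_nlap_eigenvalues_cycle3 card_nlap_eigenvalues_triangle_with_pendant by auto
  next
    assume "is_cycle_graph V E 4 \<or> is_cycle_graph V E 5"
    then show "card {\<mu>. nlap_eigenvalue V E \<mu>} = 3"
      using cycle4_nlap_eigenvalues cycle5_nlap_eigenvalues card_cycle5_eigenvalues by auto
  qed
qed

end
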